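(* Let $A$ be a dense subspace of a topological space $X$. If $C(A)$ has the countable sup property, then $C(X)$ has the countable sup property.
   Context: $C(Y)$ denotes the vector lattice of all real-valued continuous functions on a space $Y$ with the pointwise order. A vector lattice has the countable sup property if every nonempty subset possessing a supremum contains a countable subset with the same supremum. *)

theory Defs
  imports "HOL-Analysis.Analysis"
begin

text \<open>Functions are represented extensionally (value 0 outside the carrier),
  so that the pointwise order on functions is the pointwise order on X.\<close>
definition Cfun :: "'a topology \<Rightarrow> ('a \<Rightarrow> real) set" where
  "Cfun X = {f. continuous_map X euclideanreal f \<and> (\<forall>x. x \<notin> topspace X \<longrightarrow> f x = 0)}"

definition is_sup_in :: "('a \<Rightarrow> real) set \<Rightarrow> ('a \<Rightarrow> real) set \<Rightarrow> ('a \<Rightarrow> real) \<Rightarrow> bool" where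
  "is_sup_in V S s \<longleftrightarrow> s \<in> V \<and> (\<forall>g\<in>S. g \<le> s) \<and> (\<forall>h\<in>V. (\<forall>g\<in>S. g \<le> h) \<longrightarrow> s \<le> h)"

definition countable_sup_property :: "('a \<Rightarrow> real) set \<Rightarrow> bool" where
  "countable_sup_property V \<longleftrightarrow>
     (\<forall>S s. S \<subseteq> V \<and> S \<noteq> {} \<and> is_sup_in V S s \<longrightarrow>
        (\<exists>T. T \<subseteq> S \<and> countable T \<and> is_sup_in V T s))"

end

(*
  C(Y) has the countable sup property exactly when Y satisfies the countable chain condition for
  cozero sets {f > 0}: every disjoint family of nonempty ones is countable.  This condition passes
  from a dense subspace A to X, because nonempty open sets meet A, so a disjoint family Z of cozero
  sets of X gives the disjoint family Z \<inter> A of cozero sets of A of the same cardinality.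

  If the chain condition holds and s = sup S, choose for every n a maximal disjoint family of
  nonempty cozero sets on each of which some g \<in> S exceeds s - 1/(n+1).  These families are
  countable, and the chosen functions g form a countable T \<subseteq> S with sup T = s: an upper bound
  h < s somewhere would leave room for one more such cozero set inside {s - h > 1/(n+1)}.
  Conversely, an uncountable disjoint family F of cozero sets makes the constant 1 the supremum of
  the functions below 1 that are nonpositive on \<Union>F outside one member of F; a countable
  subfamily only uses countably many members, and 1 minus a bump on an unused member is a smaller
  upper bound.
*)
theory Submission
  imports Defs
begin

lemma disjoint_subfamily_meeting_all:
  "\<exists>M\<subseteq>P. pairwise disjnt M \<and> (\<forall>Z\<in>P. Z \<noteq> {} \<longrightarrow> (\<exists>W\<in>M. Z \<inter> W \<noteq> {}))"
proof -
  let ?D = "{M. M \<subseteq> P \<and> pairwise disjnt M}"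
  have "\<forall>C\<in>chains ?D. \<Union>C \<in> ?D"
  proof
    fix C assume "C \<in> chains ?D"
    then have "C \<subseteq> ?D" "chain\<^sub>\<subseteq> C" by (auto simp: chains_def)
    then show "\<Union>C \<in> ?D"
      by (auto intro: pairwise_chain_Union)
  qed
  then obtain M where M: "M \<in> ?D" and max: "\<forall>N\<in>?D. M \<subseteq> N \<longrightarrow> N = M"
    by (blast dest: Zorn_Lemma)
  have meets: "\<forall>Z\<in>P. Z \<noteq> {} \<longrightarrow> (\<exists>W\<in>M. Z \<inter> W \<noteq> {})"
  proof (intro ballI impI)
    fix Z assume Z: "Z \<in> P" "Z \<noteq> {}"
    show "\<exists>W\<in>M. Z \<inter> W \<noteq> {}"
    proof (rule ccontr)
      assume "\<not> ?thesis"
      then have "insert Z M \<in> ?D"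
        using M Z by (auto simp: pairwise_insert disjnt_def)
      then have "Z \<in> M"
        using max by blast
      with \<open>\<not> ?thesis\<close> Z(2) show False
        by blast
    qed
  qed
  show ?thesis
    using M meets by (intro exI[of _ M]) simp
qed

definition positive_set :: "'a topology \<Rightarrow> ('a \<Rightarrow> real) \<Rightarrow> 'a set" where
  "positive_set Y f = {x \<in> topspace Y. 0 < f x}"

definition zero_extension :: "'a topology \<Rightarrow> ('a \<Rightarrow> real) \<Rightarrow> 'a \<Rightarrow> real" where
  "zero_extension Y f = (\<lambda>x. if x \<in> topspace Y then f x else 0)"

definition cutoff :: "('a \<Rightarrow> real) \<Rightarrow> real \<Rightarrow> 'a \<Rightarrow> real" where
  "cutoff f c = (\<lambda>x. min 1 (max 0 (f x / c)))"

lemma openin_positive_set: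
  "continuous_map Y euclideanreal f \<Longrightarrow> openin Y (positive_set Y f)"
  using openin_continuous_map_preimage[of Y euclideanreal f "{0<..}"]
  by (simp add: positive_set_def Int_def conj_commute)

lemma positive_set_subtopology:
  "positive_set (subtopology Y A) f = positive_set Y f \<inter> A"
  by (auto simp: positive_set_def)

lemma zero_extension_in_Cfun:
  "continuous_map Y euclideanreal f \<Longrightarrow> zero_extension Y f \<in> Cfun Y"
  unfolding Cfun_def zero_extension_def
  by (auto intro: continuous_map_eq[of Y _ f])

lemma zero_extension_apply [simp]:
  "x \<in> topspace Y \<Longrightarrow> zero_extension Y f x = f x"
  by (simp add: zero_extension_def)

lemma Cfun_le_iff:
  assumes "g \<in> Cfun Y" "h \<in> Cfun Y"
  shows "g \<le> h \<longleftrightarrow> (\<forall>x\<in>topspace Y. g x \<le> h x)"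
  using assms by (auto simp: Cfun_def le_fun_def)

lemma continuous_map_Cfun: "g \<in> Cfun Y \<Longrightarrow> continuous_map Y euclideanreal g"
  by (simp add: Cfun_def)

lemma continuous_map_cutoff [continuous_intros]:
  "continuous_map Y euclideanreal (cutoff f c)" if "continuous_map Y euclideanreal f"
proof (cases "c = 0")
  case True
  then show ?thesis by (simp add: cutoff_def)
next
  case False
  then show ?thesis using that unfolding cutoff_def by (intro continuous_intros) auto
qed

lemma cutoff_bounds: "0 \<le> cutoff f c x" "cutoff f c x \<le> 1"
  by (auto simp: cutoff_def)

lemma cutoff_eq_0: "0 < c \<Longrightarrow> f x \<le> 0 \<Longrightarrow> cutoff f c x = 0"
  by (simp add: cutoff_def divide_le_0_iff)

lemma cutoff_eq_1: "0 < c \<Longrightarrow> c \<le> f x \<Longrightarrow> cutoff f c x = 1"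
  by (simp add: cutoff_def)

text \<open>Since \<open>{f > 0}\<close> is the cozero set of \<open>max f 0\<close>, this is the countable chain
  condition for cozero sets.\<close>
definition ccc_positive_sets :: "'a topology \<Rightarrow> bool" where
  "ccc_positive_sets Y \<longleftrightarrow>
     (\<forall>F. pairwise disjnt F \<and>
        (\<forall>Z\<in>F. Z \<noteq> {} \<and> (\<exists>f. continuous_map Y euclideanreal f \<and> Z = positive_set Y f))
        \<longrightarrow> countable F)"

lemma ccc_positive_sets_from_dense_subspace:
  assumes dense: "X closure_of A = topspace X"
    and ccc: "ccc_positive_sets (subtopology X A)"
  shows "ccc_positive_sets X"
  unfolding ccc_positive_sets_def
proof (intro allI impI, elim conjE)
  fix F
  assume disj: "pairwise disjnt F"
    and F: "\<forall>Z\<in>F. Z \<noteq> {} \<and> (\<exists>f. continuous_map X euclideanreal f \<and> Z = positive_set X f)"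
  have meets_A: "Z \<inter> A \<noteq> {}" if "Z \<in> F" for Z
  proof -
    obtain f where f: "continuous_map X euclideanreal f" "Z = positive_set X f" "Z \<noteq> {}"
      using F \<open>Z \<in> F\<close> by blast
    then have "openin X Z"
      by (simp add: openin_positive_set)
    with f(3) dense show ?thesis
      using openin_Int_closure_of_eq_empty[of X Z A] openin_subset by fastforce
  qed
  have inj: "inj_on (\<lambda>Z. Z \<inter> A) F"
  proof (rule inj_onI)
    fix Z W assume "Z \<in> F" "W \<in> F" "Z \<inter> A = W \<inter> A"
    with meets_A[of Z] disj show "Z = W"
      by (auto simp: pairwise_def disjnt_def)
  qed
  have "countable ((\<lambda>Z. Z \<inter> A) ` F)"
  proof (rule ccc[unfolded ccc_positive_sets_def, rule_format], intro conjI ballI)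
    show "pairwise disjnt ((\<lambda>Z. Z \<inter> A) ` F)"
      using disj by (auto simp: pairwise_def disjnt_def)
  next
    fix Z' assume "Z' \<in> (\<lambda>Z. Z \<inter> A) ` F"
    then obtain Z where Z: "Z \<in> F" "Z' = Z \<inter> A" by blast
    then obtain f where f: "continuous_map X euclideanreal f" "Z = positive_set X f"
      using F by blast
    show "Z' \<noteq> {}"
      using meets_A Z by blast
    show "\<exists>f. continuous_map (subtopology X A) euclideanreal f \<and> Z' = positive_set (subtopology X A) f"
      using f Z by (auto simp: positive_set_subtopology continuous_map_from_subtopology intro!: exI[of _ f])
  qed
  then show "countable F"
    using inj countable_image_inj_on by blast
qed

lemma bump_vanishing_where_ge_1:
  assumes "continuous_map Y euclideanreal h" "x \<in> topspace Y" "h x < 1"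
  obtains w where "w \<in> Cfun Y" "w x = 1" "\<forall>y\<in>topspace Y. w y \<le> 1"
    "\<forall>y\<in>topspace Y. 1 \<le> h y \<longrightarrow> w y = 0"
  using assms
  by (intro that[of "zero_extension Y (cutoff (\<lambda>y. 1 - h y) (1 - h x))"])
     (auto simp: cutoff_bounds cutoff_eq_0 cutoff_eq_1 intro!: zero_extension_in_Cfun continuous_intros)

definition one_member_functions :: "'a topology \<Rightarrow> 'a set set \<Rightarrow> ('a \<Rightarrow> real) set" where
  "one_member_functions Y F =
     {g \<in> Cfun Y. (\<forall>x\<in>topspace Y. g x \<le> 1) \<and> (\<exists>Z\<in>F. \<forall>x\<in>\<Union>F - Z. g x \<le> 0)}"

lemma upper_bound_one_member_functions_ge_1_on_Union:
  assumes F: "\<forall>Z\<in>F. \<exists>f. continuous_map Y euclideanreal f \<and> Z = positive_set Y f"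
    and h: "h \<in> Cfun Y" "\<forall>g\<in>one_member_functions Y F. g \<le> h"
    and x: "x \<in> \<Union>F"
  shows "1 \<le> h x"
proof (rule ccontr)
  assume "\<not> 1 \<le> h x"
  then have hx: "h x < 1" by simp
  obtain Z f where Z: "Z \<in> F" "x \<in> Z" and f: "continuous_map Y euclideanreal f" "Z = positive_set Y f"
    using F x by blast
  then have x: "x \<in> topspace Y" "0 < f x"
    by (auto simp: positive_set_def)
  obtain w where w: "w \<in> Cfun Y" "w x = 1" "\<forall>y\<in>topspace Y. w y \<le> 1"
    using bump_vanishing_where_ge_1[OF continuous_map_Cfun[OF h(1)] x(1) hx] by blast
  define g where "g = zero_extension Y (\<lambda>y. min (w y) (cutoff f (f x) y))"
  have "g \<in> one_member_functions Y F"
    unfolding one_member_functions_def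
  proof (intro CollectI conjI bexI[OF _ Z(1)] ballI)
    show "g \<in> Cfun Y"
      using continuous_map_Cfun[OF w(1)] f unfolding g_def
      by (intro zero_extension_in_Cfun continuous_intros)
    show "g y \<le> 1" if "y \<in> topspace Y" for y
      using w(3) that by (auto simp: g_def)
    show "g y \<le> 0" if "y \<in> \<Union>F - Z" for y
    proof -
      have "y \<in> topspace Y" "f y \<le> 0"
        using that F f by (auto simp: positive_set_def)
      then show ?thesis
        using x by (simp add: g_def cutoff_eq_0)
    qed
  qed
  then have "g x \<le> h x"
    using h(2) by (simp add: le_fun_def)
  moreover have "g x = 1"
    using w(2) x by (simp add: g_def cutoff_eq_1)
  ultimately show False
    using hx by simp
qed

lemma upper_bound_one_member_functions_ge_1:
  assumes F: "\<forall>Z\<in>F. \<exists>f. continuous_map Y euclideanreal f \<and> Z = positive_set Y f" "F \<noteq> {}"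
    and h: "h \<in> Cfun Y" "\<forall>g\<in>one_member_functions Y F. g \<le> h"
    and x: "x \<in> topspace Y"
  shows "1 \<le> h x"
proof (rule ccontr)
  assume "\<not> 1 \<le> h x"
  then have hx: "h x < 1" by simp
  obtain w where w: "w \<in> Cfun Y" "w x = 1" "\<forall>y\<in>topspace Y. w y \<le> 1"
    and w_eq_0: "\<forall>y\<in>topspace Y. 1 \<le> h y \<longrightarrow> w y = 0"
    using bump_vanishing_where_ge_1[OF continuous_map_Cfun[OF h(1)] x hx] by blast
  have "\<Union>F \<subseteq> topspace Y"
    using F(1) by (auto simp: positive_set_def)
  then have "\<forall>y\<in>\<Union>F. w y \<le> 0"
    using w_eq_0 upper_bound_one_member_functions_ge_1_on_Union[OF F(1) h] by fastforce
  then have "w \<in> one_member_functions Y F"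
    using w F(2) by (auto simp: one_member_functions_def)
  then have "w x \<le> h x"
    using h(2) by (simp add: le_fun_def)
  with w(2) hx show False
    by simp
qed

lemma is_sup_in_one_member_functions:
  assumes "\<forall>Z\<in>F. \<exists>f. continuous_map Y euclideanreal f \<and> Z = positive_set Y f" "F \<noteq> {}"
  shows "is_sup_in (Cfun Y) (one_member_functions Y F) (zero_extension Y (\<lambda>_. 1))"
proof -
  have one: "zero_extension Y (\<lambda>_. 1) \<in> Cfun Y"
    by (simp add: zero_extension_in_Cfun)
  moreover have "g \<le> zero_extension Y (\<lambda>_. 1)" if "g \<in> one_member_functions Y F" for g
    using that one by (auto simp: one_member_functions_def Cfun_le_iff)
  moreover have "zero_extension Y (\<lambda>_. 1) \<le> h"
    if "h \<in> Cfun Y" "\<forall>g\<in>one_member_functions Y F. g \<le> h" for h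
    using upper_bound_one_member_functions_ge_1[OF assms that] one that(1)
    by (simp add: Cfun_le_iff)
  ultimately show ?thesis
    by (simp add: is_sup_in_def)
qed

lemma le_one_minus_cutoff:
  assumes "0 < c" and g: "g \<in> Cfun Y" "\<forall>y\<in>topspace Y. g y \<le> 1" "\<forall>y\<in>positive_set Y f. g y \<le> 0"
  shows "g \<le> zero_extension Y (\<lambda>y. 1 - cutoff f c y)"
proof -
  have "g y \<le> 1 - cutoff f c y" if y: "y \<in> topspace Y" for y
  proof (cases "y \<in> positive_set Y f")
    case True
    then show ?thesis
      using g(3) cutoff_bounds(2)[of f c y] by fastforce
  next
    case False
    then show ?thesis
      using y g(2) \<open>0 < c\<close> by (simp add: positive_set_def cutoff_eq_0)
  qed
  then show ?thesis
    using g(1) by (auto simp: Cfun_def le_fun_def zero_extension_def)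
qed

lemma not_is_sup_in_one_if_member_unused:
  assumes disj: "pairwise disjnt F"
    and F: "\<forall>Z\<in>F. \<exists>f. continuous_map Y euclideanreal f \<and> Z = positive_set Y f"
    and T: "T \<subseteq> one_member_functions Y F"
    and Z: "Z \<in> F" "Z \<noteq> {}"
    and unused: "\<forall>g\<in>T. \<exists>W\<in>F. W \<noteq> Z \<and> (\<forall>x\<in>\<Union>F - W. g x \<le> 0)"
  shows "\<not> is_sup_in (Cfun Y) T (zero_extension Y (\<lambda>_. 1))"
proof
  assume sup: "is_sup_in (Cfun Y) T (zero_extension Y (\<lambda>_. 1))"
  obtain f x0 where f: "continuous_map Y euclideanreal f" "Z = positive_set Y f" and "x0 \<in> Z"
    using F Z by blast
  then have x0: "x0 \<in> topspace Y" "0 < f x0"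
    by (auto simp: positive_set_def)
  define h where "h = zero_extension Y (\<lambda>y. 1 - cutoff f (f x0) y)"
  have h: "h \<in> Cfun Y"
    unfolding h_def using f by (intro zero_extension_in_Cfun continuous_intros)
  have "g \<le> h" if g: "g \<in> T" for g
  proof -
    obtain W where W: "W \<in> F" "W \<noteq> Z" "\<forall>x\<in>\<Union>F - W. g x \<le> 0"
      using unused g by blast
    have "\<forall>y\<in>Z. y \<in> \<Union>F - W"
      using disj Z W by (auto simp: pairwise_def disjnt_def)
    then show ?thesis
      using g T W(3) f(2) x0(2) unfolding h_def
      by (intro le_one_minus_cutoff) (auto simp: one_member_functions_def)
  qed
  then have "zero_extension Y (\<lambda>_. 1) \<le> h"
    using sup h by (simp add: is_sup_in_def)
  then have "1 \<le> h x0"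
    using x0 by (auto simp: le_fun_def dest: spec[of _ x0])
  moreover have "h x0 = 0"
    using x0 by (simp add: h_def cutoff_eq_1)
  ultimately show False
    by simp
qed

lemma ccc_positive_sets_if_countable_sup_property:
  assumes csp: "countable_sup_property (Cfun Y)"
  shows "ccc_positive_sets Y"
  unfolding ccc_positive_sets_def
proof (intro allI impI, elim conjE)
  fix F
  assume disj: "pairwise disjnt F"
    and F: "\<forall>Z\<in>F. Z \<noteq> {} \<and> (\<exists>f. continuous_map Y euclideanreal f \<and> Z = positive_set Y f)"
  show "countable F"
  proof (rule ccontr)
    assume uncountable: "\<not> countable F"
    then have "F \<noteq> {}"
      by auto
    then have "one_member_functions Y F \<subseteq> Cfun Y" "one_member_functions Y F \<noteq> {}"
      by (auto simp: one_member_functions_def Cfun_def intro!: exI[of _ "\<lambda>_. 0"])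
    moreover have "is_sup_in (Cfun Y) (one_member_functions Y F) (zero_extension Y (\<lambda>_. 1))"
      using F \<open>F \<noteq> {}\<close> by (intro is_sup_in_one_member_functions) auto
    ultimately obtain T where T: "T \<subseteq> one_member_functions Y F" "countable T"
        "is_sup_in (Cfun Y) T (zero_extension Y (\<lambda>_. 1))"
      using csp unfolding countable_sup_property_def by blast
    have "\<forall>g\<in>T. \<exists>W. W \<in> F \<and> (\<forall>x\<in>\<Union>F - W. g x \<le> 0)"
      using T(1) by (auto simp: one_member_functions_def)
    then obtain c where c: "\<And>g. g \<in> T \<Longrightarrow> c g \<in> F \<and> (\<forall>x\<in>\<Union>F - c g. g x \<le> 0)"
      by metis
    have "\<not> F \<subseteq> c ` T"
      using uncountable countable_subset[OF _ countable_image[OF T(2)]] by blast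
    then obtain Z where Z: "Z \<in> F" "Z \<notin> c ` T"
      by blast
    have "\<forall>g\<in>T. \<exists>W\<in>F. W \<noteq> Z \<and> (\<forall>x\<in>\<Union>F - W. g x \<le> 0)"
    proof
      fix g assume "g \<in> T"
      with c[OF this] Z(2) show "\<exists>W\<in>F. W \<noteq> Z \<and> (\<forall>x\<in>\<Union>F - W. g x \<le> 0)"
        by (intro bexI[of _ "c g"]) auto
    qed
    moreover have "\<forall>Z\<in>F. \<exists>f. continuous_map Y euclideanreal f \<and> Z = positive_set Y f"
      using F by blast
    ultimately have "\<not> is_sup_in (Cfun Y) T (zero_extension Y (\<lambda>_. 1))"
      using disj T(1) Z(1) F by (intro not_is_sup_in_one_if_member_unused) auto
    with T(3) show False
      by blast
  qed
qed

lemma sup_nearly_attained_on_positive_set: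
  assumes sup: "is_sup_in (Cfun X) S s" and "S \<subseteq> Cfun X" "0 < e"
    and f: "continuous_map X euclideanreal f" "positive_set X f \<noteq> {}"
  shows "\<exists>g\<in>S. \<exists>y\<in>positive_set X f. s y - e < g y"
proof (rule ccontr)
  assume "\<not> ?thesis"
  then have below: "g y \<le> s y - e" if "g \<in> S" "y \<in> positive_set X f" for g y
    using that by force
  have s: "s \<in> Cfun X" "\<forall>g\<in>S. g \<le> s"
    using sup by (auto simp: is_sup_in_def)
  obtain x0 where "x0 \<in> positive_set X f"
    using f(2) by blast
  then have x0: "x0 \<in> topspace X" "0 < f x0"
    by (auto simp: positive_set_def)
  define k where "k = zero_extension X (\<lambda>y. s y - e * cutoff f (f x0) y)"
  have k: "k \<in> Cfun X"
    unfolding k_def using f(1) continuous_map_Cfun[OF s(1)]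
    by (intro zero_extension_in_Cfun continuous_intros)
  have "g \<le> k" if g: "g \<in> S" for g
  proof -
    have "g y \<le> k y" if y: "y \<in> topspace X" for y
    proof (cases "y \<in> positive_set X f")
      case True
      have "e * cutoff f (f x0) y \<le> e"
        using \<open>0 < e\<close> by (simp add: mult_left_le cutoff_bounds)
      then show ?thesis
        using below[OF g True] y by (simp add: k_def)
    next
      case False
      then have "f y \<le> 0"
        using y by (simp add: positive_set_def)
      moreover have "g y \<le> s y"
        using s(2) g by (simp add: le_fun_def)
      ultimately show ?thesis
        using y x0 by (simp add: k_def cutoff_eq_0)
    qed
    then show ?thesis
      using g k \<open>S \<subseteq> Cfun X\<close> by (auto simp: Cfun_le_iff)
  qed
  then have "s \<le> k"
    using sup k by (simp add: is_sup_in_def)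
  then have "s x0 \<le> k x0"
    by (simp add: le_fun_def)
  then show False
    using x0 \<open>0 < e\<close> by (simp add: k_def cutoff_eq_1)
qed

lemma positive_subset_approaching_sup:
  assumes sup: "is_sup_in (Cfun X) S s" and "S \<subseteq> Cfun X" "0 < e"
    and f: "continuous_map X euclideanreal f" "positive_set X f \<noteq> {}"
  obtains g f' where "g \<in> S" "continuous_map X euclideanreal f'" "positive_set X f' \<noteq> {}"
    "positive_set X f' \<subseteq> positive_set X f" "\<forall>y\<in>positive_set X f'. s y - e < g y"
proof -
  obtain g y where g: "g \<in> S" and y: "y \<in> positive_set X f" "s y - e < g y"
    using sup_nearly_attained_on_positive_set[OF assms] by blast
  define f' where "f' u = min (f u) (g u - s u + e)" for u
  have "s \<in> Cfun X"
    using sup by (simp add: is_sup_in_def)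
  then have "continuous_map X euclideanreal f'"
    unfolding f'_def using f(1) g \<open>S \<subseteq> Cfun X\<close>
    by (intro continuous_intros) (auto intro: continuous_map_Cfun)
  moreover have "y \<in> positive_set X f'"
    using y by (simp add: positive_set_def f'_def)
  moreover have "positive_set X f' \<subseteq> positive_set X f"
    by (auto simp: positive_set_def f'_def)
  moreover have "\<forall>u\<in>positive_set X f'. s u - e < g u"
    by (auto simp: positive_set_def f'_def)
  ultimately show ?thesis
    using that g by blast
qed

lemma is_sup_in_subset_if_approximating:
  assumes sup: "is_sup_in (Cfun X) S s" and "S \<subseteq> Cfun X" "T \<subseteq> S"
    and approx: "\<And>n f g. continuous_map X euclideanreal f \<Longrightarrow> positive_set X f \<noteq> {} \<Longrightarrow> g \<in> S \<Longrightarrow>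
        \<forall>y\<in>positive_set X f. s y - inverse (Suc n) < g y \<Longrightarrow>
        \<exists>t\<in>T. \<exists>y\<in>positive_set X f. s y - inverse (Suc n) < t y"
  shows "is_sup_in (Cfun X) T s"
proof -
  have s: "s \<in> Cfun X"
    using sup by (simp add: is_sup_in_def)
  have "s \<le> h" if h: "h \<in> Cfun X" and ub: "\<forall>t\<in>T. t \<le> h" for h
  proof -
    have "s x \<le> h x" if x: "x \<in> topspace X" for x
    proof (rule ccontr)
      assume "\<not> s x \<le> h x"
      then obtain n where n: "inverse (Suc n) < s x - h x"
        using reals_Archimedean[of "s x - h x"] by auto
      define e where "e = inverse (real (Suc n))"
      define f where "f y = s y - h y - e" for y
      have "continuous_map X euclideanreal f"
        unfolding f_def using continuous_map_Cfun[OF s] continuous_map_Cfun[OF h]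
        by (intro continuous_intros)
      moreover have "x \<in> positive_set X f"
        using x n by (simp add: positive_set_def f_def e_def)
      ultimately obtain g f' where g: "g \<in> S" "continuous_map X euclideanreal f'"
          "positive_set X f' \<noteq> {}" "positive_set X f' \<subseteq> positive_set X f"
          "\<forall>y\<in>positive_set X f'. s y - e < g y"
        using positive_subset_approaching_sup[OF sup \<open>S \<subseteq> Cfun X\<close>, of e f] by (auto simp: e_def)
      then obtain t y where t: "t \<in> T" "y \<in> positive_set X f'" "s y - e < t y"
        using approx[of f' g n] by (auto simp: e_def)
      then have "h y < t y"
        using g(4) by (auto simp: positive_set_def f_def)
      moreover have "t y \<le> h y"
        using ub t(1) by (simp add: le_fun_def)
      ultimately show False
        by simp
    qed
    then show ?thesis
      using s h by (simp add: Cfun_le_iff)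
  qed
  then show ?thesis
    using sup \<open>T \<subseteq> S\<close> by (auto simp: is_sup_in_def)
qed

lemma countable_subset_exceeding_on_positive_sets:
  assumes ccc: "ccc_positive_sets X"
  shows "\<exists>T\<subseteq>S. countable T \<and>
    (\<forall>f. continuous_map X euclideanreal f \<and> positive_set X f \<noteq> {} \<and>
         (\<exists>g\<in>S. \<forall>y\<in>positive_set X f. s y - e < g y)
       \<longrightarrow> (\<exists>t\<in>T. \<exists>y\<in>positive_set X f. s y - e < t y))"
proof -
  define P where "P = {positive_set X f | f. continuous_map X euclideanreal f \<and> positive_set X f \<noteq> {}
      \<and> (\<exists>g\<in>S. \<forall>y\<in>positive_set X f. s y - e < g y)}"
  obtain M where M: "M \<subseteq> P" "pairwise disjnt M"
    and meets: "\<forall>Z\<in>P. Z \<noteq> {} \<longrightarrow> (\<exists>W\<in>M. Z \<inter> W \<noteq> {})"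
    using disjoint_subfamily_meeting_all[of P] by blast
  have "countable M"
  proof (rule ccc[unfolded ccc_positive_sets_def, rule_format], intro conjI ballI)
    fix Z assume "Z \<in> M"
    with M(1) have "Z \<in> P"
      by blast
    then show "Z \<noteq> {}" "\<exists>f. continuous_map X euclideanreal f \<and> Z = positive_set X f"
      unfolding P_def by blast+
  qed (rule M(2))
  have "\<forall>W\<in>M. \<exists>g. g \<in> S \<and> (\<forall>y\<in>W. s y - e < g y)"
  proof
    fix W assume "W \<in> M"
    with M(1) have "W \<in> P"
      by blast
    then show "\<exists>g. g \<in> S \<and> (\<forall>y\<in>W. s y - e < g y)"
      unfolding P_def by blast
  qed
  then obtain gs where gs: "\<forall>W\<in>M. gs W \<in> S \<and> (\<forall>y\<in>W. s y - e < gs W y)"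
    unfolding bchoice_iff by blast
  have "\<exists>t\<in>gs ` M. \<exists>y\<in>positive_set X f. s y - e < t y"
    if f: "continuous_map X euclideanreal f" "positive_set X f \<noteq> {}"
      "\<exists>g\<in>S. \<forall>y\<in>positive_set X f. s y - e < g y" for f
  proof -
    have "positive_set X f \<in> P"
      unfolding P_def using f by blast
    with meets f(2) obtain W y where "W \<in> M" "y \<in> positive_set X f" "y \<in> W"
      by blast
    with gs show ?thesis
      by blast
  qed
  moreover have "gs ` M \<subseteq> S"
    using gs by blast
  ultimately show ?thesis
    using \<open>countable M\<close> by blast
qed

lemma countable_sup_property_if_ccc_positive_sets:
  assumes ccc: "ccc_positive_sets X"
  shows "countable_sup_property (Cfun X)"
  unfolding countable_sup_property_def
proof (intro allI impI, elim conjE)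
  fix S s
  assume "S \<subseteq> Cfun X" "S \<noteq> {}" and sup: "is_sup_in (Cfun X) S s"
  have ex: "\<forall>n. \<exists>T. T \<subseteq> S \<and> countable T \<and>
    (\<forall>f. continuous_map X euclideanreal f \<and> positive_set X f \<noteq> {} \<and>
         (\<exists>g\<in>S. \<forall>y\<in>positive_set X f. s y - inverse (Suc n) < g y)
       \<longrightarrow> (\<exists>t\<in>T. \<exists>y\<in>positive_set X f. s y - inverse (Suc n) < t y))"
    using countable_subset_exceeding_on_positive_sets[OF ccc] by blast
  obtain T where T: "\<forall>n. T n \<subseteq> S \<and> countable (T n) \<and>
    (\<forall>f. continuous_map X euclideanreal f \<and> positive_set X f \<noteq> {} \<and>
         (\<exists>g\<in>S. \<forall>y\<in>positive_set X f. s y - inverse (Suc n) < g y)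
       \<longrightarrow> (\<exists>t\<in>T n. \<exists>y\<in>positive_set X f. s y - inverse (Suc n) < t y))"
    using choice[OF ex] by blast
  have "is_sup_in (Cfun X) (\<Union>n. T n) s"
  proof (rule is_sup_in_subset_if_approximating[OF sup \<open>S \<subseteq> Cfun X\<close>])
    show "(\<Union>n. T n) \<subseteq> S"
      using T by blast
    fix n f g
    assume "continuous_map X euclideanreal f" "positive_set X f \<noteq> {}" "g \<in> S"
      "\<forall>y\<in>positive_set X f. s y - inverse (Suc n) < g y"
    then have "\<exists>t\<in>T n. \<exists>y\<in>positive_set X f. s y - inverse (Suc n) < t y"
      using T by blast
    then show "\<exists>t\<in>\<Union>n. T n. \<exists>y\<in>positive_set X f. s y - inverse (Suc n) < t y"
      by blast
  qed
  moreover have "(\<Union>n. T n) \<subseteq> S" "countable (\<Union>n. T n)"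
    using T by auto
  ultimately show "\<exists>T\<subseteq>S. countable T \<and> is_sup_in (Cfun X) T s"
    by blast
qed

theorem corollary4p12:
  fixes X :: "'a topology" and A :: "'a set"
  assumes "A \<subseteq> topspace X"
    and "X closure_of A = topspace X"
    and "countable_sup_property (Cfun (subtopology X A))"
  shows "countable_sup_property (Cfun X)"
proof -
  have "ccc_positive_sets (subtopology X A)"
    using assms(3) by (rule ccc_positive_sets_if_countable_sup_property)
  with assms(2) have "ccc_positive_sets X"
    by (rule ccc_positive_sets_from_dense_subspace)
  then show ?thesis
    by (rule countable_sup_property_if_ccc_positive_sets)
qed

end
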